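(* Assume (A1)–(A4) and let $b\in\mathcal H$ be arbitrary. Let $E_k=\rho_1\|r_k\|^2+\rho_2\|s_k\|^2+\rho_2\|y_k-y_{k-1}\|^2$ for $k\ge1$. Then for all $k\ge1$, $$E_{k+1}-E_k\le-\rho_1\|r_{k+1}-r_k\|^2-4c_0\|y_{k+1}-y_k\|^2.$$ In particular $(E_k)$ is monotonically nonincreasing and $\sum_{k=1}^\infty\|y_{k+1}-y_k\|^2<\infty$.
   Context: $\mathcal X,\mathcal Y,\mathcal H$ are real Hilbert spaces. Standing assumptions: (A1) $A:\mathcal X\to\mathcal H$ is bounded linear. (A2) $f:\mathcal Y\to(-\infty,\infty]$ is proper, lower semicontinuous and strongly convex with constant $c_0>0$: $f(ty_1+(1-t)y_2)+c_0t(1-t)\|y_1-y_2\|^2\le tf(y_1)+(1-t)f(y_2)$ for all $y_1,y_2$, $t\in[0,1]$. (A3) $W:\mathscr D(W)\subset\mathcal X\to\mathcal Y$ is a densely defined closed linear operator. (A4) There is $c_1>0$ with $\|Ax\|^2+\|Wx\|^2\ge c_1\|x\|^2$ for all $x\in\mathscr D(W)$. ADMM: fix $\rho_1,\rho_2>0$ and initial $y_0\in\mathcal Y$, $\lambda_0\in\mathcal H$, $\mu_0\in\mathcal Y$. For $k=0,1,\dots$: $x_{k+1}=\arg\min_{x\in\mathscr D(W)}\{\langle\lambda_k,Ax\rangle+\langle\mu_k,Wx\rangle+\frac{\rho_1}{2}\|Ax-b\|^2+\frac{\rho_2}{2}\|Wx-y_k\|^2\}$, $y_{k+1}=\arg\min_{y\in\mathcal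 Y}\{f(y)-\langle\mu_k,y\rangle+\frac{\rho_2}{2}\|Wx_{k+1}-y\|^2\}$, $\lambda_{k+1}=\lambda_k+\rho_1(Ax_{k+1}-b)$, $\mu_{k+1}=\mu_k+\rho_2(Wx_{k+1}-y_{k+1})$. (Under (A1)–(A4) these minimizers exist and are unique.) Residuals: $r_k=Ax_k-b$, $s_k=Wx_k-y_k$ for $k\ge1$. *)

theory Defs
  imports "HOL-Analysis.Analysis"
begin

definition proper_fun :: "('y \<Rightarrow> ereal) \<Rightarrow> bool" where
  "proper_fun f \<longleftrightarrow> (\<forall>y. f y \<noteq> -\<infinity>) \<and> (\<exists>y. f y \<noteq> \<infinity>)"

definition lsc_fun :: "('y::topological_space \<Rightarrow> ereal) \<Rightarrow> bool" where
  "lsc_fun f \<longleftrightarrow> (\<forall>c::ereal. closed {y. f y \<le> c})"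

definition strongly_convex_with :: "('y::real_normed_vector \<Rightarrow> ereal) \<Rightarrow> real \<Rightarrow> bool" where
  "strongly_convex_with f c0 \<longleftrightarrow>
     (\<forall>y1 y2 t. 0 \<le> t \<and> t \<le> 1 \<longrightarrow>
        f (t *\<^sub>R y1 + (1 - t) *\<^sub>R y2) + ereal (c0 * t * (1 - t) * (norm (y1 - y2))\<^sup>2)
          \<le> ereal t * f y1 + ereal (1 - t) * f y2)"

text \<open>W : D(W) \<subseteq> X -> Y densely defined closed linear operator (values outside D irrelevant).\<close>
definition densely_defined_closed_linear ::
  "('x::real_normed_vector \<Rightarrow> 'y::real_normed_vector) \<Rightarrow> 'x set \<Rightarrow> bool" where
  "densely_defined_closed_linear W D \<longleftrightarrow>
     subspace D \<and> closure D = UNIV \<and>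
     (\<forall>x\<in>D. \<forall>z\<in>D. \<forall>a b. W (a *\<^sub>R x + b *\<^sub>R z) = a *\<^sub>R W x + b *\<^sub>R W z) \<and>
     closed {(x, W x) | x. x \<in> D}"

text \<open>ADMM iterates: x k, y k, lam k, mu k, k = 0,1,...; x 0 is unused.\<close>
definition admm_iterates ::
  "('x::real_inner \<Rightarrow> 'h::real_inner) \<Rightarrow> ('x \<Rightarrow> 'y::real_inner) \<Rightarrow> 'x set \<Rightarrow> ('y \<Rightarrow> ereal)
   \<Rightarrow> 'h \<Rightarrow> real \<Rightarrow> real
   \<Rightarrow> (nat \<Rightarrow> 'x) \<Rightarrow> (nat \<Rightarrow> 'y) \<Rightarrow> (nat \<Rightarrow> 'h) \<Rightarrow> (nat \<Rightarrow> 'y) \<Rightarrow> bool" where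
  "admm_iterates A W D f b \<rho>1 \<rho>2 x y lam mu \<longleftrightarrow>
    (\<forall>k. x (Suc k) \<in> D \<and>
       (\<forall>z\<in>D. inner (lam k) (A (x (Suc k))) + inner (mu k) (W (x (Suc k)))
                + \<rho>1 / 2 * (norm (A (x (Suc k)) - b))\<^sup>2 + \<rho>2 / 2 * (norm (W (x (Suc k)) - y k))\<^sup>2
              \<le> inner (lam k) (A z) + inner (mu k) (W z)
                + \<rho>1 / 2 * (norm (A z - b))\<^sup>2 + \<rho>2 / 2 * (norm (W z - y k))\<^sup>2)) \<and>
    (\<forall>k. \<forall>v. f (y (Suc k)) - ereal (inner (mu k) (y (Suc k)))
                + ereal (\<rho>2 / 2 * (norm (W (x (Suc k)) - y (Suc k)))\<^sup>2)
              \<le> f v - ereal (inner (mu k) v) + ereal (\<rho>2 / 2 * (norm (W (x (Suc k)) - v))\<^sup>2)) \<and>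
    (\<forall>k. lam (Suc k) = lam k + \<rho>1 *\<^sub>R (A (x (Suc k)) - b)) \<and>
    (\<forall>k. mu (Suc k) = mu k + \<rho>2 *\<^sub>R (W (x (Suc k)) - y (Suc k)))"

end

theory Submission
  imports Defs
begin

text \<open>
  The x-step is a quadratic problem over the subspace D(W); its first-order condition reads
  <lam(k+1), A d> + <mu(k+1) + rho2 (y(k+1) - y(k)), W d> = 0 for all d in D(W). The y-step makes
  mu(k+1) a strong subgradient of f at y(k+1), so the multipliers are strongly monotone:
  <mu(k+1) - mu(k), y(k+1) - y(k)> >= 2 c0 |y(k+1) - y(k)|^2. Subtracting the x-conditions of two
  consecutive steps, tested with d = x(k+1) - x(k), and expanding the squares gives the descent of
  E; telescoping it bounds the partial sums of |y(k+1) - y(k)|^2 by E(1) / (4 c0).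
\<close>

lemma nonneg_if_quadratic_nonneg_near_0:
  fixes a c :: real
  assumes quad: "\<And>t. 0 < t \<Longrightarrow> t < 1 \<Longrightarrow> 0 \<le> t * a + t\<^sup>2 * c"
  shows "0 \<le> a"
proof (rule ccontr)
  assume "\<not> 0 \<le> a"
  hence a: "a < 0" by simp
  define t where "t = min (1/2) (-a / (2 * (\<bar>c\<bar> + 1)))"
  have "0 < -a / (2 * (\<bar>c\<bar> + 1))" using a by (intro divide_pos_pos) auto
  hence t0: "0 < t" by (simp add: t_def)
  have t1: "t < 1" by (simp add: t_def)
  have "t * \<bar>c\<bar> \<le> (-a / (2 * (\<bar>c\<bar> + 1))) * \<bar>c\<bar>"
    by (rule mult_right_mono) (auto simp: t_def)
  also have "\<dots> \<le> -a / 2"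
    using a by (simp add: field_simps)
  finally have "t * \<bar>c\<bar> \<le> -a / 2" .
  moreover have "t * c \<le> t * \<bar>c\<bar>" using t0 by (simp add: mult_left_mono)
  ultimately have "t * c \<le> -a / 2" by linarith
  hence "t\<^sup>2 * c \<le> t * (-a / 2)"
    using t0 mult_left_mono[of "t * c" "-a / 2" t] by (simp add: power2_eq_square mult.assoc)
  hence "t * a + t\<^sup>2 * c \<le> t * a / 2" by linarith
  also have "\<dots> < 0" using t0 a by (simp add: mult_pos_neg)
  finally show False using quad[OF t0 t1] by simp
qed

lemma linear_coeff_zero_if_quadratic_nonneg:
  fixes a c :: real
  assumes quad: "\<And>t. 0 \<le> t * a + t\<^sup>2 * c"
  shows "a = 0"
proof -
  have "0 \<le> a" by (rule nonneg_if_quadratic_nonneg_near_0) (rule quad)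
  moreover have "0 \<le> -a"
    by (rule nonneg_if_quadratic_nonneg_near_0[of _ c]) (use quad[of "- _"] in simp)
  ultimately show ?thesis by simp
qed

lemma power2_norm_add_scaleR:
  fixes u v :: "'a::real_inner"
  shows "(norm (u + t *\<^sub>R v))\<^sup>2 = (norm u)\<^sup>2 + 2 * t * inner u v + t\<^sup>2 * (norm v)\<^sup>2"
  unfolding power2_norm_eq_inner
  by (simp add: inner_add_left inner_add_right inner_commute power2_eq_square algebra_simps)

lemma quadratic_subspace_min_first_order:
  fixes A :: "'x::real_vector \<Rightarrow> 'h::real_inner" and W :: "'x \<Rightarrow> 'y::real_inner"
  assumes A: "linear A" and D: "subspace D"
    and W: "\<forall>u\<in>D. \<forall>v\<in>D. \<forall>a c. W (a *\<^sub>R u + c *\<^sub>R v) = a *\<^sub>R W u + c *\<^sub>R W v"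
    and x0: "x0 \<in> D" and d: "d \<in> D"
    and min: "\<And>z. z \<in> D \<Longrightarrow>
      inner l (A x0) + inner m (W x0) + \<rho>1 / 2 * (norm (A x0 - b))\<^sup>2 + \<rho>2 / 2 * (norm (W x0 - c))\<^sup>2
      \<le> inner l (A z) + inner m (W z) + \<rho>1 / 2 * (norm (A z - b))\<^sup>2 + \<rho>2 / 2 * (norm (W z - c))\<^sup>2"
  shows "inner (l + \<rho>1 *\<^sub>R (A x0 - b)) (A d) + inner (m + \<rho>2 *\<^sub>R (W x0 - c)) (W d) = 0"
proof -
  define L where "L = inner (l + \<rho>1 *\<^sub>R (A x0 - b)) (A d) + inner (m + \<rho>2 *\<^sub>R (W x0 - c)) (W d)"
  define Q where "Q = \<rho>1 / 2 * (norm (A d))\<^sup>2 + \<rho>2 / 2 * (norm (W d))\<^sup>2"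
  have "0 \<le> t * L + t\<^sup>2 * Q" for t
  proof -
    have "x0 + t *\<^sub>R d \<in> D" using D x0 d by (simp add: subspace_add subspace_scale)
    have Az: "A (x0 + t *\<^sub>R d) = A x0 + t *\<^sub>R A d"
      using A by (simp add: linear_add linear_scale)
    have Wz: "W (x0 + t *\<^sub>R d) = W x0 + t *\<^sub>R W d"
      using W[rule_format, OF x0 d, of 1 t] by simp
    have nA: "(norm (A x0 + t *\<^sub>R A d - b))\<^sup>2
        = (norm (A x0 - b))\<^sup>2 + 2 * t * inner (A x0 - b) (A d) + t\<^sup>2 * (norm (A d))\<^sup>2"
      using power2_norm_add_scaleR[of "A x0 - b" t "A d"] by (simp add: algebra_simps)
    have nW: "(norm (W x0 + t *\<^sub>R W d - c))\<^sup>2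
        = (norm (W x0 - c))\<^sup>2 + 2 * t * inner (W x0 - c) (W d) + t\<^sup>2 * (norm (W d))\<^sup>2"
      using power2_norm_add_scaleR[of "W x0 - c" t "W d"] by (simp add: algebra_simps)
    show ?thesis
      using min[OF \<open>x0 + t *\<^sub>R d \<in> D\<close>] unfolding Az Wz nA nW L_def Q_def
      by (simp add: inner_add_left inner_add_right inner_diff_left algebra_simps)
  qed
  thus ?thesis unfolding L_def by (rule linear_coeff_zero_if_quadratic_nonneg)
qed

definition prox_argmin :: "('y::real_inner \<Rightarrow> ereal) \<Rightarrow> 'y \<Rightarrow> real \<Rightarrow> 'y \<Rightarrow> 'y \<Rightarrow> bool" where
  "prox_argmin f m \<rho> w u \<longleftrightarrow>
     (\<forall>v. f u - ereal (inner m u) + ereal (\<rho> / 2 * (norm (w - u))\<^sup>2)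
          \<le> f v - ereal (inner m v) + ereal (\<rho> / 2 * (norm (w - v))\<^sup>2))"

lemma prox_argmin_finite:
  assumes "proper_fun f" and "prox_argmin f m \<rho> w u"
  shows "\<exists>a. f u = ereal a"
proof -
  obtain v a where "f v = ereal a"
    using \<open>proper_fun f\<close> unfolding proper_fun_def by (metis ereal_cases)
  have "f u \<noteq> \<infinity>"
  proof
    assume "f u = \<infinity>"
    with \<open>prox_argmin f m \<rho> w u\<close> \<open>f v = ereal a\<close> show False
      unfolding prox_argmin_def by (auto dest: spec[of _ v])
  qed
  moreover have "f u \<noteq> -\<infinity>" using \<open>proper_fun f\<close> unfolding proper_fun_def by blast
  ultimately show ?thesis by (cases "f u") auto
qed

lemma prox_argmin_strong_subgradient:
  fixes f :: "'y::real_inner \<Rightarrow> ereal"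
  assumes sc: "strongly_convex_with f c0" and pf: "proper_fun f" and min: "prox_argmin f m \<rho> w u"
    and fv: "f v = ereal a" and fu: "f u = ereal b"
  shows "b + inner (m + \<rho> *\<^sub>R (w - u)) (v - u) + c0 * (norm (v - u))\<^sup>2 \<le> a"
proof -
  define d where "d = v - u"
  define N where "N = (norm d)\<^sup>2"
  define G where "G = inner (m + \<rho> *\<^sub>R (w - u)) d"
  have "0 \<le> a - b - G - c0 * N"
  proof (rule nonneg_if_quadratic_nonneg_near_0[of _ "c0 * N + \<rho> / 2 * N"])
    fix t :: real
    assume t0: "0 < t" and t1: "t < 1"
    define ut where "ut = u + t *\<^sub>R d"
    have "t *\<^sub>R v + (1 - t) *\<^sub>R u = ut"
      by (simp add: ut_def d_def algebra_simps)
    hence conv: "f ut + ereal (c0 * t * (1 - t) * N) \<le> ereal t * f v + ereal (1 - t) * f u"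
      using sc t0 t1 unfolding strongly_convex_with_def N_def d_def
      by (metis less_eq_real_def)
    have "f ut \<noteq> -\<infinity>" using pf unfolding proper_fun_def by blast
    moreover have "f ut \<noteq> \<infinity>" using conv fv fu by auto
    ultimately obtain e where fe: "f ut = ereal e" by (cases "f ut") auto
    from conv fv fu fe have i1: "e + c0 * t * (1 - t) * N \<le> t * a + (1 - t) * b" by simp
    from min fu fe have
      "b - inner m u + \<rho> / 2 * (norm (w - u))\<^sup>2 \<le> e - inner m ut + \<rho> / 2 * (norm (w - ut))\<^sup>2"
      unfolding prox_argmin_def by (auto dest: spec[of _ ut])
    moreover have "inner m ut = inner m u + t * inner m d"
      by (simp add: ut_def inner_add_right)
    moreover have "(norm (w - ut))\<^sup>2 = (norm (w - u))\<^sup>2 - 2 * t * inner (w - u) d + t\<^sup>2 * N"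
      using power2_norm_add_scaleR[of "w - u" "-t" d] by (simp add: ut_def N_def algebra_simps)
    ultimately have i2: "b \<le> e - t * inner m d - \<rho> * t * inner (w - u) d + \<rho> / 2 * t\<^sup>2 * N"
      by (simp add: algebra_simps)
    have "t * G = t * inner m d + \<rho> * t * inner (w - u) d"
      by (simp add: G_def inner_add_left algebra_simps)
    with i1 i2 show "0 \<le> t * (a - b - G - c0 * N) + t\<^sup>2 * (c0 * N + \<rho> / 2 * N)"
      by (simp add: algebra_simps power2_eq_square)
  qed
  thus ?thesis by (simp add: G_def N_def d_def)
qed

lemma prox_argmin_strongly_monotone:
  fixes f :: "'y::real_inner \<Rightarrow> ereal"
  assumes "strongly_convex_with f c0" and "proper_fun f"
    and "prox_argmin f m \<rho> w u" and "prox_argmin f m' \<rho>' w' u'"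
  shows "2 * c0 * (norm (u' - u))\<^sup>2 \<le> inner ((m' + \<rho>' *\<^sub>R (w' - u')) - (m + \<rho> *\<^sub>R (w - u))) (u' - u)"
proof -
  obtain a a' where "f u = ereal a" and "f u' = ereal a'"
    using assms prox_argmin_finite by metis
  hence "a + inner (m + \<rho> *\<^sub>R (w - u)) (u' - u) + c0 * (norm (u' - u))\<^sup>2 \<le> a'"
    and "a' + inner (m' + \<rho>' *\<^sub>R (w' - u')) (u - u') + c0 * (norm (u - u'))\<^sup>2 \<le> a"
    using assms prox_argmin_strong_subgradient by metis+
  thus ?thesis
    by (simp add: norm_minus_commute inner_diff_left inner_diff_right algebra_simps)
qed

lemma energy_descent_inequality:
  fixes r0 r1 :: "'h::real_inner" and s0 s1 p q :: "'y::real_inner"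
  assumes opt: "\<rho>1 * inner r1 (r1 - r0) + \<rho>2 * inner (s1 + p - q) (s1 + p - s0) = 0"
    and mono: "2 * c0 * (norm p)\<^sup>2 \<le> \<rho>2 * inner s1 p"
    and "0 \<le> \<rho>2"
  shows "(\<rho>1 * (norm r1)\<^sup>2 + \<rho>2 * (norm s1)\<^sup>2 + \<rho>2 * (norm p)\<^sup>2)
           - (\<rho>1 * (norm r0)\<^sup>2 + \<rho>2 * (norm s0)\<^sup>2 + \<rho>2 * (norm q)\<^sup>2)
         \<le> - \<rho>1 * (norm (r1 - r0))\<^sup>2 - 4 * c0 * (norm p)\<^sup>2"
proof -
  have "0 \<le> \<rho>2 * inner (s1 + p - s0 - q) (s1 + p - s0 - q)" using \<open>0 \<le> \<rho>2\<close> by simp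
  moreover have "((\<rho>1 * (norm r1)\<^sup>2 + \<rho>2 * (norm s1)\<^sup>2 + \<rho>2 * (norm p)\<^sup>2)
        - (\<rho>1 * (norm r0)\<^sup>2 + \<rho>2 * (norm s0)\<^sup>2 + \<rho>2 * (norm q)\<^sup>2))
        - (- \<rho>1 * (norm (r1 - r0))\<^sup>2 - 4 * c0 * (norm p)\<^sup>2)
     = 2 * (\<rho>1 * inner r1 (r1 - r0) + \<rho>2 * inner (s1 + p - q) (s1 + p - s0))
       - \<rho>2 * inner (s1 + p - s0 - q) (s1 + p - s0 - q) - 2 * (\<rho>2 * inner s1 p - 2 * c0 * (norm p)\<^sup>2)"
    unfolding power2_norm_eq_inner
    by (simp add: inner_add_left inner_add_right inner_diff_left inner_diff_right inner_commute
        algebra_simps)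
  ultimately show ?thesis using opt mono by simp
qed

lemma summable_of_nonneg_descent:
  fixes E a :: "nat \<Rightarrow> real"
  assumes E_nonneg: "\<And>k. 0 \<le> E k" and a_nonneg: "\<And>k. 0 \<le> a k"
    and descent: "\<And>k. E (Suc k) + a k \<le> E k"
  shows "summable a"
proof (rule summableI_nonneg_bounded)
  fix n
  have "(\<Sum>i<n. a i) + E n \<le> E 0"
  proof (induction n)
    case (Suc n)
    then show ?case using descent[of n] by simp
  qed simp
  thus "(\<Sum>i<n. a i) \<le> E 0" using E_nonneg[of n] by linarith
qed (rule a_nonneg)

lemma admm_iterates_prox_argmin:
  assumes "admm_iterates A W D f b \<rho>1 \<rho>2 x y lam mu"
  shows "prox_argmin f (mu k) \<rho>2 (W (x (Suc k))) (y (Suc k))"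
  using assms unfolding admm_iterates_def prox_argmin_def by blast

lemma admm_x_step_optimality:
  assumes A: "linear A" and D: "subspace D"
    and W: "\<forall>u\<in>D. \<forall>v\<in>D. \<forall>a c. W (a *\<^sub>R u + c *\<^sub>R v) = a *\<^sub>R W u + c *\<^sub>R W v"
    and iter: "admm_iterates A W D f b \<rho>1 \<rho>2 x y lam mu" and d: "d \<in> D"
  shows "inner (lam (Suc k)) (A d) + inner (mu (Suc k) + \<rho>2 *\<^sub>R (y (Suc k) - y k)) (W d) = 0"
proof -
  note it = iter[unfolded admm_iterates_def]
  have "inner (lam k + \<rho>1 *\<^sub>R (A (x (Suc k)) - b)) (A d)
      + inner (mu k + \<rho>2 *\<^sub>R (W (x (Suc k)) - y k)) (W d) = 0"
    by (rule quadratic_subspace_min_first_order[OF A D W _ d]) (use it in blast)+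
  moreover have "lam (Suc k) = lam k + \<rho>1 *\<^sub>R (A (x (Suc k)) - b)"
    using it by blast
  moreover have "mu (Suc k) + \<rho>2 *\<^sub>R (y (Suc k) - y k) = mu k + \<rho>2 *\<^sub>R (W (x (Suc k)) - y k)"
    using it by (simp add: algebra_simps)
  ultimately show ?thesis by simp
qed

lemma admm_multiplier_monotone:
  assumes "strongly_convex_with f c0" and "proper_fun f"
    and iter: "admm_iterates A W D f b \<rho>1 \<rho>2 x y lam mu"
  shows "2 * c0 * (norm (y (Suc (Suc k)) - y (Suc k)))\<^sup>2
    \<le> \<rho>2 * inner (W (x (Suc (Suc k))) - y (Suc (Suc k))) (y (Suc (Suc k)) - y (Suc k))"
proof -
  have "\<And>j. mu (Suc j) = mu j + \<rho>2 *\<^sub>R (W (x (Suc j)) - y (Suc j))"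
    using iter unfolding admm_iterates_def by blast
  thus ?thesis
    using prox_argmin_strongly_monotone[OF assms(1,2) admm_iterates_prox_argmin[OF iter, of k]
        admm_iterates_prox_argmin[OF iter, of "Suc k"]]
    by simp
qed

definition admm_energy ::
  "('x \<Rightarrow> 'h::real_normed_vector) \<Rightarrow> ('x \<Rightarrow> 'y::real_normed_vector) \<Rightarrow> 'h \<Rightarrow> real \<Rightarrow> real
   \<Rightarrow> (nat \<Rightarrow> 'x) \<Rightarrow> (nat \<Rightarrow> 'y) \<Rightarrow> nat \<Rightarrow> real" where
  "admm_energy A W b \<rho>1 \<rho>2 x y k =
     \<rho>1 * (norm (A (x k) - b))\<^sup>2 + \<rho>2 * (norm (W (x k) - y k))\<^sup>2 + \<rho>2 * (norm (y k - y (k - 1)))\<^sup>2"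

lemma admm_energy_descent:
  assumes A: "linear A" and D: "subspace D"
    and W: "\<forall>u\<in>D. \<forall>v\<in>D. \<forall>a c. W (a *\<^sub>R u + c *\<^sub>R v) = a *\<^sub>R W u + c *\<^sub>R W v"
    and f: "strongly_convex_with f c0" "proper_fun f" and "0 \<le> \<rho>2"
    and iter: "admm_iterates A W D f b \<rho>1 \<rho>2 x y lam mu"
  shows "admm_energy A W b \<rho>1 \<rho>2 x y (Suc (Suc k)) - admm_energy A W b \<rho>1 \<rho>2 x y (Suc k)
    \<le> - \<rho>1 * (norm (A (x (Suc (Suc k))) - A (x (Suc k))))\<^sup>2
      - 4 * c0 * (norm (y (Suc (Suc k)) - y (Suc k)))\<^sup>2"
proof -
  note it = iter[unfolded admm_iterates_def]
  define r where "r j = A (x j) - b" for j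
  define s where "s j = W (x j) - y j" for j
  define p where "p = y (Suc (Suc k)) - y (Suc k)"
  define q where "q = y (Suc k) - y k"
  define d where "d = x (Suc (Suc k)) - x (Suc k)"
  have xD: "x (Suc j) \<in> D" for j using it by blast
  have dD: "d \<in> D" unfolding d_def using D xD by (simp add: subspace_diff)
  have Ad: "A d = r (Suc (Suc k)) - r (Suc k)"
    using A by (simp add: d_def r_def linear_diff)
  have "W d = W (x (Suc (Suc k))) - W (x (Suc k))"
    using W[rule_format, OF xD[of "Suc k"] xD[of k], of 1 "-1"] by (simp add: d_def)
  hence Wd: "W d = s (Suc (Suc k)) + p - s (Suc k)"
    by (simp add: s_def p_def)
  have "inner (lam (Suc (Suc k)) - lam (Suc k)) (A d)
      + inner (mu (Suc (Suc k)) + \<rho>2 *\<^sub>R p - (mu (Suc k) + \<rho>2 *\<^sub>R q)) (W d) = 0"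
    using admm_x_step_optimality[OF A D W iter dD, of "Suc k"]
      admm_x_step_optimality[OF A D W iter dD, of k]
    unfolding p_def q_def inner_diff_left by linarith
  moreover have "lam (Suc (Suc k)) - lam (Suc k) = \<rho>1 *\<^sub>R r (Suc (Suc k))"
    using it by (simp add: r_def)
  moreover have "mu (Suc (Suc k)) + \<rho>2 *\<^sub>R p - (mu (Suc k) + \<rho>2 *\<^sub>R q)
      = \<rho>2 *\<^sub>R (s (Suc (Suc k)) + p - q)"
    using it by (simp add: s_def scaleR_right_distrib scaleR_right_diff_distrib)
  ultimately have opt: "\<rho>1 * inner (r (Suc (Suc k))) (r (Suc (Suc k)) - r (Suc k))
      + \<rho>2 * inner (s (Suc (Suc k)) + p - q) (s (Suc (Suc k)) + p - s (Suc k)) = 0"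
    unfolding Ad Wd by simp
  have mono: "2 * c0 * (norm p)\<^sup>2 \<le> \<rho>2 * inner (s (Suc (Suc k))) p"
    using admm_multiplier_monotone[OF f iter, of k] by (simp add: s_def p_def)
  have "admm_energy A W b \<rho>1 \<rho>2 x y (Suc (Suc k))
      = \<rho>1 * (norm (r (Suc (Suc k))))\<^sup>2 + \<rho>2 * (norm (s (Suc (Suc k))))\<^sup>2 + \<rho>2 * (norm p)\<^sup>2"
    and "admm_energy A W b \<rho>1 \<rho>2 x y (Suc k)
      = \<rho>1 * (norm (r (Suc k)))\<^sup>2 + \<rho>2 * (norm (s (Suc k)))\<^sup>2 + \<rho>2 * (norm q)\<^sup>2"
    and "r (Suc (Suc k)) - r (Suc k) = A (x (Suc (Suc k))) - A (x (Suc k))"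
    by (simp_all add: admm_energy_def r_def s_def p_def q_def)
  with energy_descent_inequality[OF opt mono \<open>0 \<le> \<rho>2\<close>] show ?thesis
    unfolding p_def by simp
qed

theorem lemma2p4:
  fixes A :: "'x::{real_inner,complete_space} \<Rightarrow> 'h::{real_inner,complete_space}"
    and W :: "'x \<Rightarrow> 'y::{real_inner,complete_space}"
    and D :: "'x set"
    and f :: "'y \<Rightarrow> ereal"
    and b :: 'h and c0 c1 \<rho>1 \<rho>2 :: real
    and x :: "nat \<Rightarrow> 'x" and y :: "nat \<Rightarrow> 'y" and lam :: "nat \<Rightarrow> 'h" and mu :: "nat \<Rightarrow> 'y"
    and r :: "nat \<Rightarrow> 'h" and s :: "nat \<Rightarrow> 'y" and E :: "nat \<Rightarrow> real"
  assumes A1: "bounded_linear A"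
    and A2: "proper_fun f" "lsc_fun f" "c0 > 0" "strongly_convex_with f c0"
    and A3: "densely_defined_closed_linear W D"
    and A4: "c1 > 0" "\<forall>z\<in>D. (norm (A z))\<^sup>2 + (norm (W z))\<^sup>2 \<ge> c1 * (norm z)\<^sup>2"
    and rho: "\<rho>1 > 0" "\<rho>2 > 0"
    and iter: "admm_iterates A W D f b \<rho>1 \<rho>2 x y lam mu"
    and r_def: "\<forall>k\<ge>1. r k = A (x k) - b"
    and s_def: "\<forall>k\<ge>1. s k = W (x k) - y k"
    and E_def: "\<forall>k\<ge>1. E k = \<rho>1 * (norm (r k))\<^sup>2 + \<rho>2 * (norm (s k))\<^sup>2
                              + \<rho>2 * (norm (y k - y (k - 1)))\<^sup>2"
  shows "(\<forall>k\<ge>1. E (k + 1) - E k \<le> - \<rho>1 * (norm (r (k + 1) - r k))\<^sup>2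
                                   - 4 * c0 * (norm (y (k + 1) - y k))\<^sup>2)
         \<and> (\<forall>k\<ge>1. E (k + 1) \<le> E k)
         \<and> summable (\<lambda>k. (norm (y (k + 2) - y (k + 1)))\<^sup>2)"
proof -
  have D: "subspace D" and W: "\<forall>u\<in>D. \<forall>v\<in>D. \<forall>a c. W (a *\<^sub>R u + c *\<^sub>R v) = a *\<^sub>R W u + c *\<^sub>R W v"
    using A3 unfolding densely_defined_closed_linear_def by blast+
  have E_eq: "E k = admm_energy A W b \<rho>1 \<rho>2 x y k" if "k \<ge> 1" for k
    using that E_def r_def s_def unfolding admm_energy_def by simp
  have descent: "E (k + 1) - E k \<le> - \<rho>1 * (norm (r (k + 1) - r k))\<^sup>2
                                   - 4 * c0 * (norm (y (k + 1) - y k))\<^sup>2" if "k \<ge> 1" for k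
  proof -
    obtain j where "k = Suc j" using \<open>k \<ge> 1\<close> by (cases k) auto
    with admm_energy_descent[OF bounded_linear.linear[OF A1] D W A2(4,1) _ iter, of j] rho
    show ?thesis using E_eq r_def by simp
  qed
  moreover have "E (k + 1) \<le> E k" if "k \<ge> 1" for k
  proof -
    have "0 \<le> \<rho>1 * (norm (r (k + 1) - r k))\<^sup>2" and "0 \<le> 4 * c0 * (norm (y (k + 1) - y k))\<^sup>2"
      using rho A2(3) by simp_all
    with descent[OF that] show ?thesis by simp
  qed
  moreover have "summable (\<lambda>k. 4 * c0 * (norm (y (k + 2) - y (k + 1)))\<^sup>2)"
  proof (rule summable_of_nonneg_descent[where E = "\<lambda>k. E (Suc k)"])
    show "0 \<le> E (Suc k)" for k using E_def rho by simp
    show "E (Suc (Suc k)) + 4 * c0 * (norm (y (k + 2) - y (k + 1)))\<^sup>2 \<le> E (Suc k)" for k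
    proof -
      have "0 \<le> \<rho>1 * (norm (r (Suc k + 1) - r (Suc k)))\<^sup>2" using rho by simp
      with descent[of "Suc k"] show ?thesis by (simp add: add_2_eq_Suc')
    qed
  qed (use A2(3) in simp)
  ultimately show ?thesis using A2(3) by simp
qed

end
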